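(* Consider the diffeomorphisms of $\mathbb{B}$ induced, via the identification $\Phi$, by left translations $L_A(X)=AX$ or right translations $R_A(X)=XA$ of $\mathrm{Sp}(1,1)$ ($A\in\mathrm{Sp}(1,1)$) that commute with the left $\mathrm{Sp}(1)\times\{1\}$-action and the right $\mathrm{Sp}(1)I_2$-action on $\mathrm{Sp}(1,1)$ (and hence descend to $\mathbb{B}$). These diffeomorphisms are given by (i.e., generate the same group of transformations of $\mathbb{B}$ as) the following actions on $\mathbb{B}$: (1) the left action of $\{\pm1\}\times\mathrm{Sp}(1)=\{\operatorname{diag}(\epsilon,u):\epsilon=\pm1,\ u\in\mathrm{Sp}(1)\}$ given by $\operatorname{diag}(\epsilon,u)\cdot q=\epsilon uq\overline{u}$; (2) the right action of $\mathrm{SO}_0(1,1)$ by classical Möbius transformations, $q\cdot H(t)=F_{H(t)}(q)=(1+\tanh(t)q)^{-1}(q+\tanh(t))$.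
   Context: $\mathbb{H}$ denotes the quaternions, $\mathbb{B}=\{q\in\mathbb{H}:|q|<1\}$, $\mathrm{Sp}(1)=\{u\in\mathbb{H}:|u|=1\}$. Let $I_{1,1}=\operatorname{diag}(1,-1)$ and $\mathrm{Sp}(1,1)=\{A\in M_2(\mathbb{H}):A^*I_{1,1}A=I_{1,1}\}$. For $A=\begin{pmatrix}a&c\\ b&d\end{pmatrix}\in\mathrm{Sp}(1,1)$ the classical Möbius transformation is $F_A(q)=(qc+d)^{-1}(qa+b)$. For $t\in\mathbb{R}$, $H(t)=\begin{pmatrix}\cosh t&\sinh t\\ \sinh t&\cosh t\end{pmatrix}$ and $\mathrm{SO}_0(1,1)=\{H(t):t\in\mathbb{R}\}$. Slice regular functions and regular Möbius transformations: the slice regular functions on $\mathbb{B}$ are exactly the functions $f(q)=\sum_{n\ge0}q^na_n$ ($a_n\in\mathbb{H}$) with the series converging on $\mathbb{B}$. The $*$-product is $(\sum q^na_n)*(\sum q^nb_n)=\sum_n q^n\sum_{k=0}^n a_kb_{n-k}$; $f^c(q)=\sum q^n\overline{a_n}$, $f^s=f*f^c$, $f^{-*}=(f^s)^{-1}f^c$ (pointwise, off the zero set of $f^s$). For $a,b\in\mathbb{H}$ let $\ell_{a,b}(q)=qa+b$. For $A=\begin{pmatrix}a&c\\ b&d\end{pmatrix}\in\mathrm{Sp}(1,1)$, the regular Möbius transformation is $\mathcal{F}_A=\ell_{c,d}^{-*}*\ell_{a,b}$, a diffeomorphism of $\mathbb{B}$ onto $\mathbb{B}$. Identification $\Phi$: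 $\mathrm{Sp}(1)\times\{1\}=\{\operatorname{diag}(u,1)\}$ acts on $\mathrm{Sp}(1,1)$ by left multiplication and $\mathrm{Sp}(1)I_2=\{uI_2\}$ by right multiplication. It is known that $\Phi:(\mathrm{Sp}(1)\times\{1\})\backslash\mathrm{Sp}(1,1)/\mathrm{Sp}(1)I_2\to\mathbb{B}$, $[A]\mapsto(\mathcal{F}_{A^{-1}})^{-1}(0)$, is a well-defined diffeomorphism. A diffeomorphism $\widetilde f$ of $\mathrm{Sp}(1,1)$ commuting with both actions induces the diffeomorphism $f$ of $\mathbb{B}$ with $f(\Phi([X]))=\Phi([\widetilde f(X)])$. *)

theory Defs imports "HOL-Analysis.Analysis" "HOL-Library.FuncSet" begin

codatatype quat = Quat (qRe: real) (qI: real) (qJ: real) (qK: real)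

lemma quat_eq_iff: "x = y \<longleftrightarrow> qRe x = qRe y \<and> qI x = qI y \<and> qJ x = qJ y \<and> qK x = qK y"
  by (metis quat.exhaust_sel quat.sel)

lemma quat_eqI [intro?]: "qRe x = qRe y \<Longrightarrow> qI x = qI y \<Longrightarrow> qJ x = qJ y \<Longrightarrow> qK x = qK y \<Longrightarrow> x = y"
  by (simp add: quat_eq_iff)

instantiation quat :: ab_group_add
begin
primcorec zero_quat where "qRe 0 = 0" | "qI 0 = 0" | "qJ 0 = 0" | "qK 0 = 0"
primcorec plus_quat where
  "qRe (x + y) = qRe x + qRe y" | "qI (x + y) = qI x + qI y" | "qJ (x + y) = qJ x + qJ y" | "qK (x + y) = qK x + qK y"
primcorec uminus_quat where
  "qRe (- x) = - qRe x" | "qI (- x) = - qI x" | "qJ (- x) = - qJ x" | "qK (- x) = - qK x"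
primcorec minus_quat where
  "qRe (x - y) = qRe x - qRe y" | "qI (x - y) = qI x - qI y" | "qJ (x - y) = qJ x - qJ y" | "qK (x - y) = qK x - qK y"
instance by standard (simp_all add: quat_eq_iff)
end

instantiation quat :: ring_1
begin
primcorec one_quat where "qRe 1 = 1" | "qI 1 = 0" | "qJ 1 = 0" | "qK 1 = 0"
primcorec times_quat where
  "qRe (x * y) = qRe x * qRe y - qI x * qI y - qJ x * qJ y - qK x * qK y"
| "qI (x * y) = qRe x * qI y + qI x * qRe y + qJ x * qK y - qK x * qJ y"
| "qJ (x * y) = qRe x * qJ y - qI x * qK y + qJ x * qRe y + qK x * qI y"
| "qK (x * y) = qRe x * qK y + qI x * qJ y - qJ x * qI y + qK x * qRe y"
instance by standard (simp_all add: quat_eq_iff algebra_simps)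
end

instantiation quat :: real_vector
begin
primcorec scaleR_quat where
  "qRe (scaleR r x) = r * qRe x" | "qI (scaleR r x) = r * qI x" | "qJ (scaleR r x) = r * qJ x" | "qK (scaleR r x) = r * qK x"
instance by standard (simp_all add: quat_eq_iff algebra_simps)
end

instance quat :: real_algebra_1
  by standard (simp_all add: quat_eq_iff algebra_simps)

primcorec qcnj :: "quat \<Rightarrow> quat" where
  "qRe (qcnj x) = qRe x" | "qI (qcnj x) = - qI x" | "qJ (qcnj x) = - qJ x" | "qK (qcnj x) = - qK x"

instantiation quat :: division_ring
begin
definition inverse_quat_def:
  "inverse (x::quat) = scaleR (inverse ((qRe x)^2 + (qI x)^2 + (qJ x)^2 + (qK x)^2)) (qcnj x)"
definition divide_quat_def: "(x::quat) div y = x * inverse y"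
instance
proof
  fix x y :: quat
  assume "x \<noteq> 0"
  then have nz: "(qRe x)^2 + (qI x)^2 + (qJ x)^2 + (qK x)^2 \<noteq> 0"
    by (auto simp: quat_eq_iff add_nonneg_eq_0_iff)
  show "inverse x * x = 1" using nz
    by (simp add: quat_eq_iff inverse_quat_def field_simps power2_eq_square)
  show "x * inverse x = 1" using nz
    by (simp add: quat_eq_iff inverse_quat_def field_simps power2_eq_square)
qed (simp_all add: inverse_quat_def divide_quat_def quat_eq_iff)
end

instantiation quat :: real_normed_div_algebra
begin
definition norm_quat_def: "norm x = sqrt ((qRe x)^2 + (qI x)^2 + (qJ x)^2 + (qK x)^2)"
definition sgn_quat_def: "sgn (x::quat) = x /\<^sub>R norm x"
definition dist_quat_def: "dist (x::quat) y = norm (x - y)"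
definition uniformity_quat_def [code del]:
  "(uniformity :: (quat \<times> quat) filter) = (INF e\<in>{0 <..}. principal {(x, y). dist x y < e})"
definition open_quat_def [code del]:
  "open (U :: quat set) \<longleftrightarrow> (\<forall>x\<in>U. eventually (\<lambda>(x', y). x' = x \<longrightarrow> y \<in> U) uniformity)"
instance
proof
  fix r :: real and x y :: quat
  show "(norm x = 0) = (x = 0)"
    by (auto simp: norm_quat_def quat_eq_iff add_nonneg_eq_0_iff)
  show "norm (x + y) \<le> norm x + norm y"
  proof -
    define p1 where "p1 = sqrt ((qRe x)^2 + (qI x)^2)"
    define p2 where "p2 = sqrt ((qRe y)^2 + (qI y)^2)"
    define r1 where "r1 = sqrt ((qJ x)^2 + (qK x)^2)"
    define r2 where "r2 = sqrt ((qJ y)^2 + (qK y)^2)"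
    have A: "(qRe x + qRe y)^2 + (qI x + qI y)^2 \<le> (p1 + p2)^2"
      unfolding p1_def p2_def
      by (metis add_nonneg_nonneg power_mono real_sqrt_ge_zero real_sqrt_pow2 real_sqrt_sum_squares_triangle_ineq zero_le_power2)
    have B: "(qJ x + qJ y)^2 + (qK x + qK y)^2 \<le> (r1 + r2)^2"
      unfolding r1_def r2_def
      by (metis add_nonneg_nonneg power_mono real_sqrt_ge_zero real_sqrt_pow2 real_sqrt_sum_squares_triangle_ineq zero_le_power2)
    have "norm (x + y) \<le> sqrt ((p1 + p2)^2 + (r1 + r2)^2)"
      unfolding norm_quat_def using A B by (simp add: add.assoc[symmetric])
    also have "\<dots> \<le> sqrt (p1^2 + r1^2) + sqrt (p2^2 + r2^2)"
      by (rule real_sqrt_sum_squares_triangle_ineq)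
    also have "\<dots> = norm x + norm y"
      unfolding p1_def p2_def r1_def r2_def norm_quat_def by (simp add: add.assoc)
    finally show ?thesis .
  qed
  show "norm (scaleR r x) = \<bar>r\<bar> * norm x"
    by (simp add: norm_quat_def power_mult_distrib distrib_left [symmetric] real_sqrt_mult)
  show "norm (x * y) = norm x * norm y"
    by (simp add: norm_quat_def real_sqrt_mult [symmetric] power2_eq_square algebra_simps)
qed (rule sgn_quat_def dist_quat_def open_quat_def uniformity_quat_def)+
end


definition qball :: "quat set" where "qball = ball 0 1"
definition Sp1 :: "quat set" where "Sp1 = {u. norm u = 1}"

text \<open>2x2 quaternionic matrices.  For A = [[a,c],[b,d]] we have
  a = A$1$1, c = A$1$2, b = A$2$1, d = A$2$2.\<close>
type_synonym qmat = "quat ^ 2 ^ 2"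

definition mat_a :: "qmat \<Rightarrow> quat" where "mat_a A = A $ 1 $ 1"
definition mat_c :: "qmat \<Rightarrow> quat" where "mat_c A = A $ 1 $ 2"
definition mat_b :: "qmat \<Rightarrow> quat" where "mat_b A = A $ 2 $ 1"
definition mat_d :: "qmat \<Rightarrow> quat" where "mat_d A = A $ 2 $ 2"

definition diag2 :: "quat \<Rightarrow> quat \<Rightarrow> qmat" where
  "diag2 x y = (\<chi> i j. if i = j then (if i = 1 then x else y) else 0)"

definition I11 :: qmat where "I11 = diag2 1 (-1)"

definition ctrans :: "qmat \<Rightarrow> qmat" where "ctrans A = (\<chi> i j. qcnj (A $ j $ i))"

definition Sp11 :: "qmat set" where "Sp11 = {A. ctrans A ** I11 ** A = I11}"

definition minv :: "qmat \<Rightarrow> qmat" where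
  "minv A = (THE B. B ** A = mat 1 \<and> A ** B = mat 1)"

definition mobius :: "qmat \<Rightarrow> quat \<Rightarrow> quat" where
  "mobius A q = inverse (q * mat_c A + mat_d A) * (q * mat_a A + mat_b A)"

definition Hmat :: "real \<Rightarrow> qmat" where
  "Hmat t = (\<chi> i j. of_real (if i = j then cosh t else sinh t))"

definition has_coeffs :: "(quat \<Rightarrow> quat) \<Rightarrow> (nat \<Rightarrow> quat) \<Rightarrow> bool" where
  "has_coeffs f a \<longleftrightarrow> (\<forall>q\<in>qball. (\<lambda>n. q ^ n * a n) sums f q)"

definition slice_regular :: "(quat \<Rightarrow> quat) \<Rightarrow> bool" where
  "slice_regular f \<longleftrightarrow> (\<exists>a. has_coeffs f a)"

definition coeffs :: "(quat \<Rightarrow> quat) \<Rightarrow> nat \<Rightarrow> quat" where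
  "coeffs f = (SOME a. has_coeffs f a)"

definition star_prod :: "(quat \<Rightarrow> quat) \<Rightarrow> (quat \<Rightarrow> quat) \<Rightarrow> quat \<Rightarrow> quat" (infixl \<open>\<star>\<close> 70) where
  "f \<star> g = (\<lambda>q. \<Sum>n. q ^ n * (\<Sum>k\<le>n. coeffs f k * coeffs g (n - k)))"

definition reg_conj :: "(quat \<Rightarrow> quat) \<Rightarrow> quat \<Rightarrow> quat" where
  "reg_conj f = (\<lambda>q. \<Sum>n. q ^ n * qcnj (coeffs f n))"

definition sym_fn :: "(quat \<Rightarrow> quat) \<Rightarrow> quat \<Rightarrow> quat" where
  "sym_fn f = f \<star> reg_conj f"

definition reg_inv :: "(quat \<Rightarrow> quat) \<Rightarrow> quat \<Rightarrow> quat" where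
  "reg_inv f = (\<lambda>q. inverse (sym_fn f q) * reg_conj f q)"

definition ell :: "quat \<Rightarrow> quat \<Rightarrow> quat \<Rightarrow> quat" where
  "ell a b = (\<lambda>q. q * a + b)"

definition reg_mobius :: "qmat \<Rightarrow> quat \<Rightarrow> quat" where
  "reg_mobius A = reg_inv (ell (mat_c A) (mat_d A)) \<star> ell (mat_a A) (mat_b A)"

text \<open>\<Phi>([A]) = (\<F>_{A^{-1}})^{-1}(0), computed on a representative A.\<close>
definition Phi :: "qmat \<Rightarrow> quat" where
  "Phi A = (THE q. q \<in> qball \<and> reg_mobius (minv A) q = 0)"

definition commutes_actions :: "(qmat \<Rightarrow> qmat) \<Rightarrow> bool" where
  "commutes_actions F \<longleftrightarrow>
     (\<forall>u\<in>Sp1. \<forall>X\<in>Sp11. F (diag2 u 1 ** X) = diag2 u 1 ** F X) \<and>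
     (\<forall>u\<in>Sp1. \<forall>X\<in>Sp11. F (X ** mat u) = F X ** mat u)"

definition induced :: "(qmat \<Rightarrow> qmat) \<Rightarrow> quat \<Rightarrow> quat" where
  "induced F = (\<lambda>q. Phi (F (SOME X. X \<in> Sp11 \<and> Phi X = q)))"

text \<open>Group (under composition) of transformations of the ball generated by a set of maps,
  all maps being taken as restrictions to the ball.\<close>
inductive_set gen_group :: "(quat \<Rightarrow> quat) set \<Rightarrow> (quat \<Rightarrow> quat) set" for G where
  gen_id: "restrict id qball \<in> gen_group G"
| gen_base: "f \<in> G \<Longrightarrow> restrict f qball \<in> gen_group G"
| gen_comp: "f \<in> gen_group G \<Longrightarrow> g \<in> gen_group G \<Longrightarrow> compose qball f g \<in> gen_group G"
| gen_inv: "f \<in> gen_group G \<Longrightarrow> restrict (inv_into qball f) qball \<in> gen_group G"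

definition translation_maps :: "(quat \<Rightarrow> quat) set" where
  "translation_maps =
     {induced (\<lambda>X. A ** X) | A. A \<in> Sp11 \<and> commutes_actions (\<lambda>X. A ** X)} \<union>
     {induced (\<lambda>X. X ** A) | A. A \<in> Sp11 \<and> commutes_actions (\<lambda>X. X ** A)}"

definition model_maps :: "(quat \<Rightarrow> quat) set" where
  "model_maps =
     {(\<lambda>q. of_real \<epsilon> * u * q * qcnj u) | \<epsilon> u. \<epsilon> \<in> {1, -1} \<and> u \<in> Sp1} \<union>
     {mobius (Hmat t) | t. True}"

end

theory Submission
  imports Defs
begin

(* Write X = [[a, c], [b, d]] in Sp(1,1). The regular inverse of ell c d is an explicit
   geometric power series, and with it the regular Moebius transformation of X^-1 is seen to
   vanish on the ball exactly at b * d^-1; so Phi [X] = b * d^-1.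
   A left translation L_A commuting with the Sp(1) x {1}-action commutes with diag(-1, 1), so A is
   diagonal and L_A induces the rotation q |-> d * q * d^-1. A right translation R_A commuting with
   the Sp(1) I_2-action commutes with i I_2 and j I_2, so A is real, and R_A induces the classical
   F_A, which for real A in Sp(1,1) is +- F_{H(t)}; note -F_{H(t)}(q) = F_{H(-t)}(-q).
   Conversely rotations come from L_{diag(1,u)}, q |-> -q from R_{I_{1,1}} and F_{H(t)} from
   R_{H(t)}, so the two families generate the same group. *)

section \<open>Quaternions\<close>

lemma quat_components_of_real [simp]:
  "qRe (of_real r) = r" "qI (of_real r) = 0" "qJ (of_real r) = 0" "qK (of_real r) = 0"
  by (simp_all add: of_real_def)

lemma quat_components_numeral [simp]:
  "qRe (numeral n) = numeral n" "qI (numeral n) = 0" "qJ (numeral n) = 0" "qK (numeral n) = 0"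
  using quat_components_of_real[of "numeral n"] by (simp_all del: quat_components_of_real)

lemma qcnj_mult: "qcnj (x * y) = qcnj y * qcnj x"
  by (simp add: quat_eq_iff algebra_simps)

lemma qcnj_add [simp]: "qcnj (x + y) = qcnj x + qcnj y"
  and qcnj_minus [simp]: "qcnj (- x) = - qcnj x"
  and qcnj_diff [simp]: "qcnj (x - y) = qcnj x - qcnj y"
  and qcnj_zero [simp]: "qcnj 0 = 0"
  and qcnj_one [simp]: "qcnj 1 = 1"
  and qcnj_of_real [simp]: "qcnj (of_real r) = of_real r"
  and qcnj_scaleR [simp]: "qcnj (r *\<^sub>R x) = r *\<^sub>R qcnj x"
  and qcnj_qcnj [simp]: "qcnj (qcnj x) = x"
  by (simp_all add: quat_eq_iff)

lemma qcnj_eq_0_iff [simp]: "qcnj x = 0 \<longleftrightarrow> x = 0"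
  by (auto simp: quat_eq_iff)

lemma power2_norm_quat: "(norm x)\<^sup>2 = (qRe x)\<^sup>2 + (qI x)\<^sup>2 + (qJ x)\<^sup>2 + (qK x)\<^sup>2"
  by (simp add: norm_quat_def)

lemma norm_qcnj [simp]: "norm (qcnj x) = norm x"
  by (simp add: norm_quat_def)

lemma mult_qcnj: "x * qcnj x = of_real ((norm x)\<^sup>2)"
  and qcnj_mult_self: "qcnj x * x = of_real ((norm x)\<^sup>2)"
  unfolding power2_norm_quat by (simp_all add: quat_eq_iff power2_eq_square algebra_simps)

lemma inverse_quat_unit: "norm (u::quat) = 1 \<Longrightarrow> inverse u = qcnj u"
  by (metis inverse_unique mult_qcnj of_real_1 power_one)

lemma mult_inverse_cancel_left:
  fixes a :: "'a::division_ring"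
  assumes "a \<noteq> 0"
  shows "a * (inverse a * b) = b" and "inverse a * (a * b) = b"
  using assms by (simp_all flip: mult.assoc)

lemma Reals_mult_commute: "x \<in> \<real> \<Longrightarrow> x * y = y * (x::'a::real_algebra_1)"
  by (auto elim: Reals_cases simp: of_real_def)

lemma quat_commute_ij_imp_Reals:
  assumes "Quat 0 1 0 0 * x = x * Quat 0 1 0 0" "Quat 0 0 1 0 * x = x * Quat 0 0 1 0"
  shows "x \<in> \<real>"
proof -
  have "x = of_real (qRe x)"
    using assms by (simp add: quat_eq_iff)
  then show ?thesis by (metis Reals_of_real)
qed

lemma bounded_linear_quat_components:
  "bounded_linear qRe" "bounded_linear qI" "bounded_linear qJ" "bounded_linear qK"
  by (rule bounded_linear_intro[where K=1]; auto simp: norm_quat_def intro!: real_le_rsqrt)+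

lemma norm_quat_le_l1: "norm x \<le> \<bar>qRe x\<bar> + \<bar>qI x\<bar> + \<bar>qJ x\<bar> + \<bar>qK x\<bar>"
  unfolding norm_quat_def
  by (rule real_le_lsqrt) (simp_all add: power2_eq_square algebra_simps abs_mult_self_eq)

instance quat :: banach
proof
  fix X :: "nat \<Rightarrow> quat"
  assume "Cauchy X"
  then have "convergent (\<lambda>n. h (X n))" if "bounded_linear h" for h :: "quat \<Rightarrow> real"
    using bounded_linear.Cauchy[OF that] Cauchy_convergent_iff by blast
  then obtain r0 r1 r2 r3 where
    "(\<lambda>n. qRe (X n)) \<longlonglongrightarrow> r0" "(\<lambda>n. qI (X n)) \<longlonglongrightarrow> r1"
    "(\<lambda>n. qJ (X n)) \<longlonglongrightarrow> r2" "(\<lambda>n. qK (X n)) \<longlonglongrightarrow> r3"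
    using bounded_linear_quat_components unfolding convergent_def by metis
  then have components_lim: "(\<lambda>n. \<bar>qRe (X n) - r0\<bar> + \<bar>qI (X n) - r1\<bar> + \<bar>qJ (X n) - r2\<bar> + \<bar>qK (X n) - r3\<bar>)
      \<longlonglongrightarrow> \<bar>r0 - r0\<bar> + \<bar>r1 - r1\<bar> + \<bar>r2 - r2\<bar> + \<bar>r3 - r3\<bar>"
    by (intro tendsto_intros)
  have "(\<lambda>n. X n - Quat r0 r1 r2 r3) \<longlonglongrightarrow> 0"
  proof (rule Lim_null_comparison)
    show "\<forall>\<^sub>F n in sequentially. norm (X n - Quat r0 r1 r2 r3)
        \<le> \<bar>qRe (X n) - r0\<bar> + \<bar>qI (X n) - r1\<bar> + \<bar>qJ (X n) - r2\<bar> + \<bar>qK (X n) - r3\<bar>"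
    proof (intro always_eventually allI)
      fix n
      show "norm (X n - Quat r0 r1 r2 r3)
          \<le> \<bar>qRe (X n) - r0\<bar> + \<bar>qI (X n) - r1\<bar> + \<bar>qJ (X n) - r2\<bar> + \<bar>qK (X n) - r3\<bar>"
        using norm_quat_le_l1[of "X n - Quat r0 r1 r2 r3"] by simp
    qed
  qed (use components_lim in simp)
  then show "convergent X"
    unfolding convergent_def using LIM_zero_cancel by blast
qed

section \<open>Uniqueness of power series coefficients\<close>

lemma powser_sums_zero_imp_coeff_zero:
  fixes a :: "nat \<Rightarrow> 'a::{real_normed_field,banach}"
  assumes "\<And>x. norm x < 1 \<Longrightarrow> (\<lambda>n. a n * x ^ n) sums 0"
  shows "a m = 0"
proof (induction m rule: less_induct)
  case (less m)
  have "(\<lambda>n. a (n + m) * x ^ n) sums 0" if "x \<noteq> 0" "norm x < 1" for x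
  proof -
    have "(\<lambda>n. a (n + m) * x ^ (n + m)) sums (0 - (\<Sum>i<m. a i * x ^ i))"
      using sums_split_initial_segment[OF assms[of x]] that by simp
    also have "(\<Sum>i<m. a i * x ^ i) = 0"
      using less by simp
    finally have "(\<lambda>n. a (n + m) * x ^ (n + m) / x ^ m) sums (0 / x ^ m)"
      by (intro sums_divide) simp
    then show ?thesis
      using that by (simp add: power_add)
  qed
  then have "((\<lambda>x. 0) \<longlongrightarrow> a (0 + m)) (at (0::'a))"
    using powser_limit_0_strong[of 1 "\<lambda>n. a (n + m)" "\<lambda>_. 0"] by auto
  then show ?case
    using LIM_const_eq by fastforce
qed

lemma quat_powser_sums_zero_imp_coeff_zero:
  assumes "\<And>q. q \<in> qball \<Longrightarrow> (\<lambda>n. q ^ n * w n) sums 0"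
  shows "w m = 0"
proof -
  have "h (w m) = 0" if h: "bounded_linear h" for h :: "quat \<Rightarrow> real"
  proof (rule powser_sums_zero_imp_coeff_zero)
    fix x :: real
    assume "norm x < 1"
    then have "(\<lambda>n. x ^ n *\<^sub>R w n) sums 0"
      using assms[of "of_real x"] by (simp add: qball_def scaleR_conv_of_real)
    then have "(\<lambda>n. h (x ^ n *\<^sub>R w n)) sums h 0"
      by (rule bounded_linear.sums[OF h])
    then show "(\<lambda>n. h (w n) * x ^ n) sums 0"
      by (simp add: linear_simps[OF h] mult.commute)
  qed
  then show ?thesis
    using bounded_linear_quat_components by (simp add: quat_eq_iff)
qed

lemma coeffs_eqI:
  assumes "has_coeffs f a"
  shows "coeffs f = a"
proof
  fix m
  have "has_coeffs f (coeffs f)"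
    unfolding coeffs_def using assms by (rule someI[where P = "has_coeffs f"])
  then have "(\<lambda>n. q ^ n * (coeffs f n - a n)) sums 0" if "q \<in> qball" for q
    using sums_diff[of "\<lambda>n. q ^ n * coeffs f n" "f q" "\<lambda>n. q ^ n * a n" "f q"] assms that
    by (simp add: has_coeffs_def right_diff_distrib)
  then show "coeffs f m = a m"
    using quat_powser_sums_zero_imp_coeff_zero[of "\<lambda>n. coeffs f n - a n" m] by simp
qed

lemma has_coeffs_coeffs: "slice_regular f \<Longrightarrow> has_coeffs f (coeffs f)"
  unfolding slice_regular_def coeffs_def by (rule someI_ex[where P = "has_coeffs f"])

section \<open>Regular Moebius transformations\<close>

definition ell_coeffs :: "quat \<Rightarrow> quat \<Rightarrow> nat \<Rightarrow> quat" where
  "ell_coeffs a b n = (if n = 0 then b else if n = 1 then a else 0)"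

lemma ell_sums: "(\<lambda>n. q ^ n * ell_coeffs a b n) sums ell a b q"
proof -
  have "(\<lambda>n. q ^ n * ell_coeffs a b n) sums (\<Sum>n\<in>{0, 1}. q ^ n * ell_coeffs a b n)"
    by (rule sums_finite) (auto simp: ell_coeffs_def)
  then show ?thesis
    by (simp add: ell_coeffs_def ell_def add.commute)
qed

lemma coeffs_ell: "coeffs (ell a b) = ell_coeffs a b"
  by (rule coeffs_eqI) (simp add: has_coeffs_def ell_sums)

lemma slice_regular_ell: "slice_regular (ell a b)"
  unfolding slice_regular_def has_coeffs_def using ell_sums by blast

lemma reg_conj_ell: "reg_conj (ell c d) = ell (qcnj c) (qcnj d)"
proof
  fix q
  have "(\<lambda>n. q ^ n * qcnj (coeffs (ell c d) n)) = (\<lambda>n. q ^ n * ell_coeffs (qcnj c) (qcnj d) n)"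
    by (simp add: coeffs_ell ell_coeffs_def fun_eq_iff)
  then show "reg_conj (ell c d) q = ell (qcnj c) (qcnj d) q"
    unfolding reg_conj_def using ell_sums sums_unique by metis
qed

definition shift :: "(nat \<Rightarrow> 'a::zero) \<Rightarrow> nat \<Rightarrow> 'a" where
  "shift w n = (case n of 0 \<Rightarrow> 0 | Suc m \<Rightarrow> w m)"

lemma shift_0 [simp]: "shift w 0 = 0" and shift_Suc [simp]: "shift w (Suc n) = w n"
  by (simp_all add: shift_def)

lemma sums_shift:
  fixes q :: "'a::real_normed_algebra_1"
  assumes "(\<lambda>n. q ^ n * w n) sums s"
  shows "(\<lambda>n. q ^ n * shift w n) sums (q * s)"
proof -
  have "(\<lambda>n. q ^ Suc n * shift w (Suc n)) sums (q * s)"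
    using sums_mult[OF assms, of q] by (simp add: mult.assoc)
  then show ?thesis
    by (subst (asm) sums_Suc_iff) simp
qed

lemma star_ell:
  assumes g: "slice_regular g" and q: "q \<in> qball"
  shows "(g \<star> ell a b) q = g q * b + q * g q * a"
proof -
  let ?s = "coeffs g"
  have g_sums: "(\<lambda>n. q ^ n * ?s n) sums g q"
    using has_coeffs_coeffs[OF g] q by (simp add: has_coeffs_def)
  have convolution: "(\<Sum>k\<le>n. ?s k * ell_coeffs a b (n - k)) = ?s n * b + shift ?s n * a" for n
  proof (cases n)
    case (Suc m)
    have "(\<Sum>k\<le>Suc m. ?s k * ell_coeffs a b (Suc m - k))
        = (\<Sum>k<m. ?s k * ell_coeffs a b (Suc m - k)) + ?s m * a + ?s (Suc m) * b"
      by (simp add: lessThan_Suc_atMost[symmetric] ell_coeffs_def)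
    also have "(\<Sum>k<m. ?s k * ell_coeffs a b (Suc m - k)) = 0"
      by (intro sum.neutral) (auto simp: ell_coeffs_def)
    finally show ?thesis
      using Suc by simp
  qed (simp add: ell_coeffs_def)
  have "(\<lambda>n. q ^ n * ?s n * b + q ^ n * shift ?s n * a) sums (g q * b + q * g q * a)"
    by (intro sums_add sums_mult2 sums_shift g_sums)
  then show ?thesis
    unfolding star_prod_def coeffs_ell convolution by (simp add: sums_iff distrib_left mult.assoc)
qed

definition ell_sym :: "quat \<Rightarrow> quat \<Rightarrow> quat \<Rightarrow> quat" where
  "ell_sym c d q = (norm d)\<^sup>2 *\<^sub>R 1 + (2 * qRe (d * qcnj c)) *\<^sub>R q + (norm c)\<^sup>2 *\<^sub>R q\<^sup>2"

lemma sym_fn_ell: "q \<in> qball \<Longrightarrow> sym_fn (ell c d) q = ell_sym c d q"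
  unfolding sym_fn_def reg_conj_ell star_ell[OF slice_regular_ell]
  unfolding ell_sym_def ell_def power2_norm_quat quat_eq_iff
  by (simp add: power2_eq_square algebra_simps)

lemma ell_sym_commute: "ell_sym c d q * q = q * ell_sym c d q"
  by (simp add: ell_sym_def algebra_simps power2_eq_square)

(* Since q * c + d = (1 + q * c * d^-1) * d, the regular inverse of ell c d is d^-1 times a
   geometric series. *)
definition ell_inv_coeffs :: "quat \<Rightarrow> quat \<Rightarrow> nat \<Rightarrow> quat" where
  "ell_inv_coeffs c d n = inverse d * (- c * inverse d) ^ n"

lemma ell_inv_coeffs_recurrence:
  assumes "d \<noteq> 0"
  shows "d * ell_inv_coeffs c d n + c * shift (ell_inv_coeffs c d) n = (if n = 0 then 1 else 0)"
  using assms by (cases n) (simp_all add: ell_inv_coeffs_def mult.assoc[symmetric])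

(* The convolution of the real coefficients of ell_sym c d, the coefficients of ell^c star ell,
   with the inverse coefficients; the recurrence collapses it to the coefficients of ell^c. *)
lemma ell_sym_coeffs:
  fixes c d :: quat
  assumes "d \<noteq> 0"
  defines "e \<equiv> ell_inv_coeffs c d"
  shows "(norm d)\<^sup>2 *\<^sub>R e n + (2 * qRe (d * qcnj c)) *\<^sub>R shift e n + (norm c)\<^sup>2 *\<^sub>R shift (shift e) n
    = ell_coeffs (qcnj c) (qcnj d) n"
proof -
  have cross_term: "of_real (2 * qRe (d * qcnj c)) = qcnj d * c + qcnj c * d"
    by (simp add: quat_eq_iff algebra_simps)
  have scalars: "(norm d)\<^sup>2 *\<^sub>R x = qcnj d * d * x" "(norm c)\<^sup>2 *\<^sub>R x = qcnj c * c * x"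
    "(2 * qRe (d * qcnj c)) *\<^sub>R x = (qcnj d * c + qcnj c * d) * x" for x
    by (simp_all only: scaleR_conv_of_real qcnj_mult_self cross_term)
  have rec: "d * e m + c * shift e m = (if m = 0 then 1 else 0)" for m
    using ell_inv_coeffs_recurrence[OF assms(1)] by (simp add: e_def)
  have rec_shift: "d * shift e n + c * shift (shift e) n = (if n = 1 then 1 else 0)"
    by (cases n) (simp_all add: rec)
  have "(norm d)\<^sup>2 *\<^sub>R e n + (2 * qRe (d * qcnj c)) *\<^sub>R shift e n + (norm c)\<^sup>2 *\<^sub>R shift (shift e) n
      = qcnj d * (d * e n + c * shift e n) + qcnj c * (d * shift e n + c * shift (shift e) n)"
    unfolding scalars by (simp add: distrib_left distrib_right mult.assoc)
  also have "\<dots> = ell_coeffs (qcnj c) (qcnj d) n"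
    unfolding rec[of n] rec_shift by (simp add: ell_coeffs_def)
  finally show ?thesis .
qed

lemma summable_ell_inv_coeffs:
  assumes cd: "norm c < norm d" and q: "q \<in> qball"
  shows "summable (\<lambda>n. q ^ n * ell_inv_coeffs c d n)"
proof (rule summable_comparison_test')
  let ?r = "norm c / norm d"
  have "d \<noteq> 0"
    using cd by auto
  then have r: "?r < 1"
    using cd by simp
  show "summable (\<lambda>n. norm (inverse d) * ?r ^ n)"
    using r by (intro summable_mult summable_geometric) simp
  fix n
  have "norm q ^ n \<le> 1"
    using q by (simp add: qball_def power_le_one)
  then show "norm (q ^ n * ell_inv_coeffs c d n) \<le> norm (inverse d) * ?r ^ n"
    by (simp add: ell_inv_coeffs_def norm_mult norm_power norm_inverse power_divide
        divide_inverse mult_left_le_one_le mult.assoc)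
qed

(* ell_sym c d has real coefficients, so multiplying a power series by it pointwise convolves
   the coefficients. *)
lemma ell_sym_mult_ell_inv_series:
  assumes cd: "norm c < norm d" and q: "q \<in> qball"
  shows "ell_sym c d q * (\<Sum>n. q ^ n * ell_inv_coeffs c d n) = ell (qcnj c) (qcnj d) q"
proof -
  let ?e = "ell_inv_coeffs c d" and ?t = "2 * qRe (d * qcnj c)"
  let ?S = "\<Sum>n. q ^ n * ?e n"
  have d: "d \<noteq> 0"
    using cd by auto
  have coeffs_eq: "q ^ n * ell_coeffs (qcnj c) (qcnj d) n = (norm d)\<^sup>2 *\<^sub>R (q ^ n * ?e n)
      + ?t *\<^sub>R (q ^ n * shift ?e n) + (norm c)\<^sup>2 *\<^sub>R (q ^ n * shift (shift ?e) n)" for n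
    unfolding ell_sym_coeffs[OF d, symmetric] by (simp only: distrib_left mult_scaleR_right)
  have S: "(\<lambda>n. q ^ n * ?e n) sums ?S"
    using summable_ell_inv_coeffs[OF cd q] by (rule summable_sums)
  have "(\<lambda>n. q ^ n * ell_coeffs (qcnj c) (qcnj d) n)
      sums ((norm d)\<^sup>2 *\<^sub>R ?S + ?t *\<^sub>R (q * ?S) + (norm c)\<^sup>2 *\<^sub>R (q * (q * ?S)))"
    unfolding coeffs_eq by (intro sums_add sums_scaleR_right sums_shift S)
  also have "(norm d)\<^sup>2 *\<^sub>R ?S + ?t *\<^sub>R (q * ?S) + (norm c)\<^sup>2 *\<^sub>R (q * (q * ?S)) = ell_sym c d q * ?S"
    by (simp add: ell_sym_def distrib_right power2_eq_square mult.assoc)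
  finally show ?thesis
    using ell_sums sums_unique2 by blast
qed

lemma ell_nonzero:
  assumes "norm c < norm d" and "q \<in> qball"
  shows "ell c d q \<noteq> 0"
proof
  assume "ell c d q = 0"
  then have "norm d = norm q * norm c"
    by (simp add: ell_def add_eq_0_iff norm_mult)
  also have "\<dots> \<le> norm c"
    using assms(2) by (simp add: qball_def mult_left_le_one_le)
  finally show False
    using assms(1) by simp
qed

lemma ell_sym_nonzero:
  assumes "norm c < norm d" and "q \<in> qball"
  shows "ell_sym c d q \<noteq> 0"
  using ell_sym_mult_ell_inv_series[OF assms] ell_nonzero[of "qcnj c" "qcnj d"] assms by force

lemma reg_inv_ell:
  assumes "q \<in> qball"
  shows "reg_inv (ell c d) q = inverse (ell_sym c d q) * ell (qcnj c) (qcnj d) q"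
  unfolding reg_inv_def reg_conj_ell sym_fn_ell[OF assms] ..

lemma has_coeffs_reg_inv_ell:
  assumes "norm c < norm d"
  shows "has_coeffs (reg_inv (ell c d)) (ell_inv_coeffs c d)"
  unfolding has_coeffs_def
proof
  fix q
  assume q: "q \<in> qball"
  have "reg_inv (ell c d) q = (\<Sum>n. q ^ n * ell_inv_coeffs c d n)"
    unfolding reg_inv_ell[OF q] ell_sym_mult_ell_inv_series[OF assms q, symmetric]
    using ell_sym_nonzero[OF assms q] by (simp add: mult.assoc[symmetric])
  then show "(\<lambda>n. q ^ n * ell_inv_coeffs c d n) sums reg_inv (ell c d) q"
    using summable_ell_inv_coeffs[OF assms q] by (simp add: summable_sums)
qed

lemma reg_mobius_eq:
  assumes cd: "norm (mat_c B) < norm (mat_d B)" and q: "q \<in> qball"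
  defines "P \<equiv> ell_sym (mat_c B) (mat_d B) q" and "L \<equiv> ell (qcnj (mat_c B)) (qcnj (mat_d B)) q"
  shows "reg_mobius B q = inverse P * (L * mat_b B + q * L * mat_a B)"
proof -
  let ?f = "reg_inv (ell (mat_c B) (mat_d B))"
  have "slice_regular ?f"
    using has_coeffs_reg_inv_ell[OF cd] by (auto simp: slice_regular_def)
  then have "reg_mobius B q = ?f q * mat_b B + q * ?f q * mat_a B"
    unfolding reg_mobius_def by (rule star_ell[OF _ q])
  also have "\<dots> = inverse P * L * mat_b B + q * inverse P * L * mat_a B"
    unfolding reg_inv_ell[OF q] P_def L_def by (simp only: mult.assoc)
  also have "q * inverse P = inverse P * q"
    using mult_commute_imp_mult_inverse_commute[OF ell_sym_commute] by (simp add: P_def)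
  finally show ?thesis
    by (simp only: mult.assoc distrib_left)
qed

section \<open>The group Sp(1,1)\<close>

definition mk_qmat :: "quat \<Rightarrow> quat \<Rightarrow> quat \<Rightarrow> quat \<Rightarrow> qmat" where
  "mk_qmat a c b d = (\<chi> i j. if i = 1 then (if j = 1 then a else c) else (if j = 1 then b else d))"

lemma mk_qmat_sel [simp]:
  "mat_a (mk_qmat a c b d) = a" "mat_c (mk_qmat a c b d) = c"
  "mat_b (mk_qmat a c b d) = b" "mat_d (mk_qmat a c b d) = d"
  by (simp_all add: mk_qmat_def mat_a_def mat_b_def mat_c_def mat_d_def)

lemma qmat_eq_iff:
  "(A::qmat) = B \<longleftrightarrow> mat_a A = mat_a B \<and> mat_c A = mat_c B \<and> mat_b A = mat_b B \<and> mat_d A = mat_d B"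
  by (auto simp: vec_eq_iff forall_2 mat_a_def mat_b_def mat_c_def mat_d_def)

lemma mk_qmat_eta: "mk_qmat (mat_a A) (mat_c A) (mat_b A) (mat_d A) = A"
  by (simp add: qmat_eq_iff)

lemma matrix_mult_sel [simp]:
  "mat_a (A ** B) = mat_a A * mat_a B + mat_c A * mat_b B"
  "mat_c (A ** B) = mat_a A * mat_c B + mat_c A * mat_d B"
  "mat_b (A ** B) = mat_b A * mat_a B + mat_d A * mat_b B"
  "mat_d (A ** B) = mat_b A * mat_c B + mat_d A * mat_d B"
  by (simp_all add: matrix_matrix_mult_def sum_2 mat_a_def mat_b_def mat_c_def mat_d_def)

lemma ctrans_sel [simp]:
  "mat_a (ctrans A) = qcnj (mat_a A)" "mat_c (ctrans A) = qcnj (mat_b A)"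
  "mat_b (ctrans A) = qcnj (mat_c A)" "mat_d (ctrans A) = qcnj (mat_d A)"
  by (simp_all add: ctrans_def mat_a_def mat_b_def mat_c_def mat_d_def)

lemma diag2_sel [simp]:
  "mat_a (diag2 x y) = x" "mat_c (diag2 x y) = 0" "mat_b (diag2 x y) = 0" "mat_d (diag2 x y) = y"
  by (simp_all add: diag2_def mat_a_def mat_b_def mat_c_def mat_d_def)

lemma I11_sel [simp]: "mat_a I11 = 1" "mat_c I11 = 0" "mat_b I11 = 0" "mat_d I11 = -1"
  by (simp_all add: I11_def)

lemma mat_sel [simp]: "mat_a (mat x) = x" "mat_c (mat x) = 0" "mat_b (mat x) = 0" "mat_d (mat x) = x"
  by (simp_all add: mat_def mat_a_def mat_b_def mat_c_def mat_d_def)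

lemma Hmat_sel [simp]:
  "mat_a (Hmat t) = of_real (cosh t)" "mat_c (Hmat t) = of_real (sinh t)"
  "mat_b (Hmat t) = of_real (sinh t)" "mat_d (Hmat t) = of_real (cosh t)"
  by (simp_all add: Hmat_def mat_a_def mat_b_def mat_c_def mat_d_def)

lemma Sp11_iff: "A \<in> Sp11 \<longleftrightarrow>
   qcnj (mat_a A) * mat_a A - qcnj (mat_b A) * mat_b A = 1 \<and>
   qcnj (mat_a A) * mat_c A - qcnj (mat_b A) * mat_d A = 0 \<and>
   qcnj (mat_c A) * mat_a A - qcnj (mat_d A) * mat_b A = 0 \<and>
   qcnj (mat_c A) * mat_c A - qcnj (mat_d A) * mat_d A = -1"
  unfolding Sp11_def qmat_eq_iff by (simp add: algebra_simps)

lemma ctrans_mult: "ctrans (A ** B) = ctrans B ** ctrans A"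
  unfolding qmat_eq_iff by (simp add: qcnj_mult)

lemma Sp11_mult:
  assumes "A \<in> Sp11" "B \<in> Sp11"
  shows "A ** B \<in> Sp11"
proof -
  have "ctrans (A ** B) ** I11 ** (A ** B) = ctrans B ** (ctrans A ** I11 ** A) ** B"
    by (simp only: ctrans_mult matrix_mul_assoc)
  also have "\<dots> = I11"
    using assms by (simp add: Sp11_def)
  finally show ?thesis
    by (simp add: Sp11_def)
qed

lemma mat_1_Sp11: "mat 1 \<in> Sp11"
  unfolding Sp11_iff by simp

lemma I11_Sp11: "I11 \<in> Sp11"
  unfolding Sp11_iff by simp

lemma Sp1_basis: "1 \<in> Sp1" "-1 \<in> Sp1" "Quat 0 1 0 0 \<in> Sp1" "Quat 0 0 1 0 \<in> Sp1"
  by (simp_all add: Sp1_def norm_quat_def)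

lemma diag2_Sp11: "u \<in> Sp1 \<Longrightarrow> diag2 1 u \<in> Sp11"
  unfolding Sp11_iff Sp1_def by (simp add: qcnj_mult_self)

lemma Hmat_Sp11: "Hmat t \<in> Sp11"
proof -
  have "cosh t * cosh t - sinh t * sinh t = 1" "sinh t * sinh t - cosh t * cosh t = -1"
    using cosh_square_eq[of t] by (simp_all add: power2_eq_square)
  then show ?thesis
    unfolding Sp11_iff by (simp add: mult.commute flip: of_real_mult of_real_diff)
qed

context
  fixes X :: qmat and a b c d
  assumes X: "X \<in> Sp11"
  defines "a \<equiv> mat_a X" and "b \<equiv> mat_b X" and "c \<equiv> mat_c X" and "d \<equiv> mat_d X"
begin

lemma Sp11_norm_a: "(norm a)\<^sup>2 = 1 + (norm b)\<^sup>2"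
proof -
  have "of_real ((norm a)\<^sup>2 - (norm b)\<^sup>2) = (1::quat)"
    using X by (simp add: Sp11_iff a_def b_def qcnj_mult_self del: of_real_power flip: of_real_diff)
  then have "(norm a)\<^sup>2 - (norm b)\<^sup>2 = 1"
    by (metis of_real_1 of_real_eq_iff)
  then show ?thesis
    by simp
qed

lemma Sp11_norm_d: "(norm d)\<^sup>2 = 1 + (norm c)\<^sup>2"
proof -
  have "of_real ((norm c)\<^sup>2 - (norm d)\<^sup>2) = (-1::quat)"
    using X by (simp add: Sp11_iff c_def d_def qcnj_mult_self del: of_real_power flip: of_real_diff)
  then have "(norm c)\<^sup>2 - (norm d)\<^sup>2 = -1"
    by (metis of_real_1 of_real_eq_iff of_real_minus)
  then show ?thesis
    by simp
qed

lemma Sp11_norm_b_eq_c: "norm b = norm c"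
proof -
  have "qcnj a * c = qcnj b * d"
    using X by (simp add: Sp11_iff a_def b_def c_def d_def)
  then have "(norm a * norm c)\<^sup>2 = (norm b * norm d)\<^sup>2"
    by (metis norm_mult norm_qcnj)
  then have "(norm c)\<^sup>2 = (norm b)\<^sup>2"
    using Sp11_norm_a Sp11_norm_d by (simp add: power_mult_distrib algebra_simps)
  then show ?thesis
    by (simp add: power2_eq_iff_nonneg)
qed

lemma Sp11_norm_a_eq_d: "norm a = norm d"
proof -
  have "(norm a)\<^sup>2 = (norm d)\<^sup>2"
    using Sp11_norm_a Sp11_norm_d Sp11_norm_b_eq_c by simp
  then show ?thesis
    by (metis power2_eq_iff_nonneg norm_ge_zero)
qed

lemma Sp11_norm_b_less_d: "norm b < norm d"
  using Sp11_norm_d Sp11_norm_b_eq_c by (simp add: power2_less_imp_less)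

lemma Sp11_a_nonzero: "a \<noteq> 0"
  using Sp11_norm_a by (metis norm_zero add_pos_nonneg zero_less_one zero_le_power2 zero_power2 less_irrefl)

lemma Sp11_d_nonzero: "d \<noteq> 0"
  using Sp11_norm_a_eq_d Sp11_a_nonzero by auto

lemma Sp11_row: "d * qcnj c = b * qcnj a"
proof -
  have "qcnj a * c = qcnj b * d"
    using X by (simp add: Sp11_iff a_def b_def c_def d_def)
  then have "a * qcnj a * c = a * qcnj b * d"
    by (simp add: mult.assoc)
  then have "qcnj c * of_real ((norm a)\<^sup>2) = qcnj d * b * qcnj a"
    by (metis mult_qcnj qcnj_mult qcnj_of_real qcnj_qcnj mult.assoc)
  then have "d * qcnj c * of_real ((norm a)\<^sup>2) = d * qcnj d * b * qcnj a"
    by (simp add: mult.assoc)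
  also have "d * qcnj d = of_real ((norm a)\<^sup>2)"
    by (simp add: mult_qcnj Sp11_norm_a_eq_d)
  finally have "d * qcnj c * of_real ((norm a)\<^sup>2) = b * qcnj a * of_real ((norm a)\<^sup>2)"
    by (metis mult.assoc Reals_mult_commute Reals_of_real)
  then show ?thesis
    using Sp11_a_nonzero by simp
qed

lemma minv_Sp11: "minv X = mk_qmat (qcnj a) (- qcnj b) (- qcnj c) (qcnj d)"
proof -
  let ?B = "mk_qmat (qcnj a) (- qcnj b) (- qcnj c) (qcnj d)"
  have row': "c * qcnj d = a * qcnj b"
    using arg_cong[OF Sp11_row, of qcnj] by (simp add: qcnj_mult)
  have "(norm a)\<^sup>2 - (norm c)\<^sup>2 = 1" "(norm d)\<^sup>2 - (norm b)\<^sup>2 = 1"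
    using Sp11_norm_a Sp11_norm_d Sp11_norm_b_eq_c by simp_all
  then have "a * qcnj a - c * qcnj c = 1" "d * qcnj d - b * qcnj b = 1"
    by (metis mult_qcnj of_real_1 of_real_diff)+
  then have right_inverse: "X ** ?B = mat 1"
    using Sp11_row row' unfolding qmat_eq_iff by (simp add: a_def b_def c_def d_def algebra_simps)
  have left_inverse: "?B ** X = mat 1"
    using X unfolding Sp11_iff qmat_eq_iff by (simp add: a_def b_def c_def d_def algebra_simps)
  show ?thesis
    unfolding minv_def
  proof (rule the_equality)
    fix B
    assume "B ** X = mat 1 \<and> X ** B = mat 1"
    then show "B = ?B"
      using right_inverse left_inverse by (metis matrix_mul_assoc matrix_mul_lid matrix_mul_rid)
  qed (use right_inverse left_inverse in blast)
qed

end

section \<open>The identification \<open>\<Phi>\<close>\<close>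

lemma twisted_eq_imp_zero:
  fixes b d q e :: quat
  assumes "norm b < norm d" and "norm q < 1" and "e * d = q * e * b"
  shows "e = 0"
proof (rule ccontr)
  assume "e \<noteq> 0"
  moreover have "norm e * norm d = norm e * (norm q * norm b)"
    using arg_cong[OF assms(3), of norm] by (simp add: norm_mult)
  ultimately have "norm d = norm q * norm b"
    by simp
  also have "\<dots> \<le> norm b"
    using assms(2) by (simp add: mult_left_le_one_le)
  finally show False
    using assms(1) by simp
qed

(* The left side is the numerator of reg_mobius (minv X) q given by reg_mobius_eq, the right column
   of minv X being (- qcnj b, qcnj d); so F_{X^-1} vanishes exactly where e * d = q * e * b. *)
lemma minv_numerator_factor:
  fixes a b c d q :: quat
  assumes d: "d \<noteq> 0" and row: "d * qcnj c = b * qcnj a"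
  defines "e \<equiv> q - b * inverse d"
  shows "(q * - b + d) * - qcnj c + q * (q * - b + d) * qcnj a = (e * d - q * e * b) * qcnj a"
proof -
  have "qcnj c = inverse d * (b * qcnj a)"
    using d by (simp add: row[symmetric] mult_inverse_cancel_left)
  then show ?thesis
    using d by (simp add: e_def algebra_simps mult_inverse_cancel_left)
qed

lemma Phi_eq:
  assumes X: "X \<in> Sp11"
  shows "Phi X = mat_b X * inverse (mat_d X)"
proof -
  define a b c d where "a = mat_a X" "b = mat_b X" "c = mat_c X" "d = mat_d X"
  note abcd = a_b_c_d_def
  have bd: "norm b < norm d" and "d \<noteq> 0" and "a \<noteq> 0" and row: "d * qcnj c = b * qcnj a"
    using Sp11_norm_b_less_d[OF X] Sp11_d_nonzero[OF X] Sp11_a_nonzero[OF X] Sp11_row[OF X]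
    by (simp_all add: abcd)
  have zero_iff: "reg_mobius (minv X) q = 0 \<longleftrightarrow> q = b * inverse d" if q: "q \<in> qball" for q
  proof -
    let ?e = "q - b * inverse d"
    have minv: "minv X = mk_qmat (qcnj a) (- qcnj b) (- qcnj c) (qcnj d)"
      using minv_Sp11[OF X] by (simp add: abcd)
    then have "norm (mat_c (minv X)) < norm (mat_d (minv X))"
      using bd by simp
    note ell_sym_nonzero[OF this q] and reg_mobius_eq[OF this q]
    then have "reg_mobius (minv X) q = 0 \<longleftrightarrow> (?e * d - q * ?e * b) * qcnj a = 0"
      using minv_numerator_factor[OF \<open>d \<noteq> 0\<close> row] by (simp add: minv ell_def)
    also have "\<dots> \<longleftrightarrow> ?e * d = q * ?e * b"
      using \<open>a \<noteq> 0\<close> by simp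
    also have "\<dots> \<longleftrightarrow> ?e = 0"
      using twisted_eq_imp_zero[OF bd, of q ?e] q by (auto simp: qball_def)
    finally show ?thesis
      by simp
  qed
  have "norm (b * inverse d) = norm b / norm d"
    by (simp only: norm_mult norm_inverse divide_inverse)
  then have "b * inverse d \<in> qball"
    using bd \<open>d \<noteq> 0\<close> by (simp add: qball_def divide_less_eq_1)
  then show ?thesis
    unfolding Phi_def abcd[symmetric] using zero_iff by (intro the_equality) auto
qed

lemma Phi_surj:
  assumes q: "q \<in> qball"
  shows "\<exists>X\<in>Sp11. Phi X = q"
proof -
  have "(norm q)\<^sup>2 < 1"
    using q by (simp add: qball_def abs_square_less_1)
  define t where "t = 1 / sqrt (1 - (norm q)\<^sup>2)"
  have t: "t\<^sup>2 * (1 - (norm q)\<^sup>2) = 1" "t \<noteq> 0"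
    using \<open>(norm q)\<^sup>2 < 1\<close> by (simp_all add: t_def power_divide)
  define X where "X = mk_qmat (t *\<^sub>R 1) (t *\<^sub>R qcnj q) (t *\<^sub>R q) (t *\<^sub>R 1)"
  have "qcnj (t *\<^sub>R 1) * (t *\<^sub>R 1) - qcnj (t *\<^sub>R q) * (t *\<^sub>R q) = of_real (t\<^sup>2 * (1 - (norm q)\<^sup>2))"
    and "qcnj (t *\<^sub>R qcnj q) * (t *\<^sub>R qcnj q) - qcnj (t *\<^sub>R 1) * (t *\<^sub>R 1) = - of_real (t\<^sup>2 * (1 - (norm q)\<^sup>2))"
    unfolding quat_eq_iff power2_norm_quat by (simp_all add: power2_eq_square algebra_simps)
  then have "X \<in> Sp11"
    using t(1) unfolding Sp11_iff X_def mk_qmat_sel by simp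
  moreover have "Phi X = mat_b X * inverse (mat_d X)"
    using \<open>X \<in> Sp11\<close> by (rule Phi_eq)
  then have "Phi X = q"
    using t(2) by (simp add: X_def scaleR_conv_of_real Reals_mult_commute[of "of_real t"] mult.assoc)
  ultimately show ?thesis
    by blast
qed

lemma induced_eq:
  assumes "q \<in> qball"
  obtains X where "X \<in> Sp11" "Phi X = q" "induced F q = Phi (F X)"
proof -
  let ?X = "SOME X. X \<in> Sp11 \<and> Phi X = q"
  have "?X \<in> Sp11 \<and> Phi ?X = q"
    using Phi_surj[OF assms] by (metis (mono_tags, lifting) someI_ex)
  then show ?thesis
    using that[of ?X] by (simp add: induced_def)
qed

section \<open>Translations commuting with both actions\<close>

lemma commutes_actions_left_mult_imp_diagonal:
  assumes "commutes_actions (\<lambda>X. A ** X)"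
  shows "mat_b A = 0" and "mat_c A = 0"
proof -
  have "A ** (diag2 (-1) 1 ** mat 1) = diag2 (-1) 1 ** (A ** mat 1)"
    using assms Sp1_basis(2) mat_1_Sp11 unfolding commutes_actions_def by blast
  then have "A ** diag2 (-1) 1 = diag2 (-1) 1 ** A"
    by simp
  then show "mat_b A = 0" "mat_c A = 0"
    unfolding qmat_eq_iff by (simp_all add: quat_eq_iff)
qed

lemma commutes_actions_left_mult_diag2: "commutes_actions (\<lambda>X. diag2 1 u ** X)"
proof -
  have "diag2 1 u ** diag2 v 1 = diag2 v 1 ** diag2 1 u" for v
    unfolding qmat_eq_iff by simp
  then show ?thesis
    unfolding commutes_actions_def by (simp add: matrix_mul_assoc)
qed

lemma Phi_left_mult:
  assumes A: "A \<in> Sp11" "mat_b A = 0" and X: "X \<in> Sp11"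
  shows "Phi (A ** X) = mat_d A * Phi X * inverse (mat_d A)"
proof -
  have "mat_d A \<noteq> 0" "mat_d X \<noteq> 0"
    using Sp11_d_nonzero A(1) X by blast+
  have "Phi (A ** X) = mat_d A * mat_b X * inverse (mat_d A * mat_d X)"
    using Phi_eq[OF Sp11_mult[OF A(1) X]] A(2) by simp
  also have "\<dots> = mat_d A * Phi X * inverse (mat_d A)"
    using \<open>mat_d A \<noteq> 0\<close> \<open>mat_d X \<noteq> 0\<close>
    by (simp add: Phi_eq[OF X] nonzero_inverse_mult_distrib mult.assoc)
  finally show ?thesis .
qed

lemma induced_left_mult:
  assumes "A \<in> Sp11" "mat_b A = 0" "q \<in> qball"
  shows "induced (\<lambda>X. A ** X) q = mat_d A * q * inverse (mat_d A)"
  using induced_eq[OF assms(3)] Phi_left_mult[OF assms(1,2)] by metis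

definition real_qmat :: "qmat \<Rightarrow> bool" where
  "real_qmat A \<longleftrightarrow> mat_a A \<in> \<real> \<and> mat_b A \<in> \<real> \<and> mat_c A \<in> \<real> \<and> mat_d A \<in> \<real>"

lemma real_qmatE:
  assumes "real_qmat A"
  obtains a b c d :: real where "A = mk_qmat (a *\<^sub>R 1) (c *\<^sub>R 1) (b *\<^sub>R 1) (d *\<^sub>R 1)"
proof -
  have "x \<in> \<real> \<Longrightarrow> \<exists>r. x = r *\<^sub>R 1" for x :: quat
    by (auto elim: Reals_cases simp: of_real_def)
  then show ?thesis
    using assms that unfolding real_qmat_def by (metis mk_qmat_eta)
qed

lemma real_qmat_Hmat: "real_qmat (Hmat t)"
  by (simp add: real_qmat_def)

lemma real_qmat_I11: "real_qmat I11"
  by (simp add: real_qmat_def)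

lemma commutes_actions_right_mult_iff: "commutes_actions (\<lambda>X. X ** A) \<longleftrightarrow> real_qmat A"
proof
  assume "commutes_actions (\<lambda>X. X ** A)"
  then have "mat u ** A = A ** mat u" if "u \<in> Sp1" for u
    using that mat_1_Sp11 unfolding commutes_actions_def by (metis matrix_mul_lid)
  from this[OF Sp1_basis(3)] this[OF Sp1_basis(4)] show "real_qmat A"
    unfolding real_qmat_def qmat_eq_iff by (simp add: quat_commute_ij_imp_Reals)
next
  assume "real_qmat A"
  then have "mat u ** A = A ** mat u" for u
    unfolding real_qmat_def qmat_eq_iff by (simp add: Reals_mult_commute)
  then show "commutes_actions (\<lambda>X. X ** A)"
    unfolding commutes_actions_def by (simp add: matrix_mul_assoc[symmetric])
qed

lemma Phi_right_mult:
  assumes A: "A \<in> Sp11" "real_qmat A" and X: "X \<in> Sp11"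
  shows "Phi (X ** A) = mobius A (Phi X)"
proof -
  obtain a b c d :: real where A_eq: "A = mk_qmat (a *\<^sub>R 1) (c *\<^sub>R 1) (b *\<^sub>R 1) (d *\<^sub>R 1)"
    using real_qmatE[OF A(2)] .
  define q where "q = Phi X"
  define num den where "num = a *\<^sub>R q + b *\<^sub>R 1" and "den = c *\<^sub>R q + d *\<^sub>R 1"
  have "mat_d X \<noteq> 0"
    using Sp11_d_nonzero[OF X] .
  then have "mat_b X = q * mat_d X"
    by (simp add: q_def Phi_eq[OF X] mult.assoc)
  then have XA: "mat_b (X ** A) = num * mat_d X" "mat_d (X ** A) = den * mat_d X"
    by (simp_all add: A_eq num_def den_def algebra_simps)
  then have "den \<noteq> 0"
    using Sp11_d_nonzero[OF Sp11_mult[OF X A(1)]] by auto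
  have "Phi (X ** A) = num * mat_d X * inverse (den * mat_d X)"
    using Phi_eq[OF Sp11_mult[OF X A(1)]] XA by simp
  also have "\<dots> = num * inverse den"
    using \<open>mat_d X \<noteq> 0\<close> \<open>den \<noteq> 0\<close>
    by (simp add: nonzero_inverse_mult_distrib mult.assoc mult_inverse_cancel_left)
  also have "\<dots> = inverse den * num"
    by (rule mult_commute_imp_mult_inverse_commute[symmetric])
      (simp add: num_def den_def algebra_simps)
  also have "\<dots> = mobius A q"
    by (simp add: mobius_def A_eq num_def den_def)
  finally show ?thesis
    by (simp add: q_def)
qed

lemma induced_right_mult:
  assumes "A \<in> Sp11" "real_qmat A" "q \<in> qball"
  shows "induced (\<lambda>X. X ** A) q = mobius A q"
  using induced_eq[OF assms(3)] Phi_right_mult[OF assms(1,2)] by metis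

lemma real_Sp11_parametrization:
  fixes a b c d :: real
  assumes "a * a - b * b = 1" and "a * c - b * d = 0" and "c * c - d * d = -1"
  obtains t \<epsilon> \<sigma> where "\<epsilon> = 1 \<or> \<epsilon> = -1" "\<sigma> = 1 \<or> \<sigma> = -1"
    "a = \<epsilon> * cosh t" "b = \<epsilon> * sinh t" "c = \<sigma> * \<epsilon> * sinh t" "d = \<sigma> * \<epsilon> * cosh t"
proof -
  have a2: "a * a = 1 + b * b" and d2: "d * d = 1 + c * c"
    using assms(1,3) by linarith+
  have "a \<noteq> 0"
  proof
    assume "a = 0"
    with a2 have "1 + b * b = 0"
      by simp
    then show False
      using zero_le_square[of b] by linarith
  qed
  have "(a * a) * (c * c) = (b * b) * (d * d)"
    using assms(2) by (metis eq_iff_diff_eq_0 mult.commute mult.left_commute)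
  then have cb: "c * c = b * b"
    unfolding a2 d2 by (simp add: algebra_simps)
  define \<sigma> where "\<sigma> = d / a"
  have "\<sigma> * \<sigma> = (d * d) / (a * a)"
    by (simp add: \<sigma>_def)
  also have "\<dots> = 1"
    using \<open>a \<noteq> 0\<close> a2 d2 cb by (metis divide_self mult_eq_0_iff)
  finally have \<sigma>: "\<sigma> = 1 \<or> \<sigma> = -1"
    by (simp add: square_eq_1_iff)
  have d: "d = \<sigma> * a"
    using \<open>a \<noteq> 0\<close> by (simp add: \<sigma>_def)
  have "a * (c - \<sigma> * b) = 0"
    using assms(2) d by (simp add: algebra_simps)
  then have c: "c = \<sigma> * b"
    using \<open>a \<noteq> 0\<close> by simp
  define \<epsilon> where "\<epsilon> = sgn a"
  have \<epsilon>: "\<epsilon> = 1 \<or> \<epsilon> = -1"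
    using \<open>a \<noteq> 0\<close> by (simp add: \<epsilon>_def sgn_if)
  define t where "t = arsinh (\<epsilon> * b)"
  have "cosh t = sqrt (b * b + 1)"
    using \<epsilon> by (auto simp: t_def cosh_arsinh_real power2_eq_square)
  also have "\<dots> = \<bar>a\<bar>"
    using a2 by (metis add.commute real_sqrt_abs2)
  finally have ab: "a = \<epsilon> * cosh t" "b = \<epsilon> * sinh t"
    using \<epsilon> by (auto simp: t_def \<epsilon>_def abs_sgn)
  show ?thesis
    using \<epsilon> \<sigma> by (intro that[of \<epsilon> \<sigma> t]) (simp_all add: ab c d)
qed

lemma mobius_real_Sp11:
  assumes "A \<in> Sp11" and "real_qmat A"
  obtains t where "mobius A = mobius (Hmat t)" | t where "mobius A = (\<lambda>q. - mobius (Hmat t) q)"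
proof -
  obtain a b c d :: real where A_eq: "A = mk_qmat (a *\<^sub>R 1) (c *\<^sub>R 1) (b *\<^sub>R 1) (d *\<^sub>R 1)"
    using real_qmatE[OF assms(2)] .
  have "a * a - b * b = 1" "a * c - b * d = 0" "c * c - d * d = -1"
    using assms(1) by (simp_all add: Sp11_iff A_eq quat_eq_iff)
  then obtain t \<epsilon> \<sigma> where \<epsilon>: "\<epsilon> = 1 \<or> \<epsilon> = -1" and \<sigma>: "\<sigma> = 1 \<or> \<sigma> = -1"
    and abcd: "a = \<epsilon> * cosh t" "b = \<epsilon> * sinh t" "c = \<sigma> * \<epsilon> * sinh t" "d = \<sigma> * \<epsilon> * cosh t"
    by (rule real_Sp11_parametrization)
  have mobius_A: "mobius A q = \<sigma> *\<^sub>R mobius (Hmat t) q" for q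
  proof -
    let ?z = "sinh t *\<^sub>R q + cosh t *\<^sub>R 1" and ?w = "cosh t *\<^sub>R q + sinh t *\<^sub>R 1"
    have "mobius A q = inverse ((\<sigma> * \<epsilon>) *\<^sub>R ?z) * (\<epsilon> *\<^sub>R ?w)"
      by (simp add: mobius_def A_eq abcd algebra_simps)
    also have "\<dots> = (inverse (\<sigma> * \<epsilon>) * \<epsilon>) *\<^sub>R (inverse ?z * ?w)"
      by (simp add: inverse_scaleR_distrib)
    also have "inverse (\<sigma> * \<epsilon>) * \<epsilon> = \<sigma>"
      using \<epsilon> \<sigma> by auto
    also have "inverse ?z * ?w = mobius (Hmat t) q"
      by (simp add: mobius_def of_real_def)
    finally show ?thesis .
  qed
  from \<sigma> show ?thesis
  proof
    assume "\<sigma> = 1"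
    then show ?thesis
      using mobius_A that(1)[of t] by (simp add: fun_eq_iff)
  next
    assume "\<sigma> = -1"
    then show ?thesis
      using mobius_A that(2)[of t] by (simp add: fun_eq_iff)
  qed
qed

lemma mobius_Hmat_uminus: "- mobius (Hmat t) q = mobius (Hmat (- t)) (- q)"
  by (simp only: mobius_def Hmat_sel sinh_minus cosh_minus of_real_minus minus_mult_minus
      mult_minus_left mult_minus_right minus_minus minus_add_distrib[symmetric])

section \<open>The generated groups\<close>

lemma gen_group_subset:
  assumes "\<And>f. f \<in> G \<Longrightarrow> restrict f qball \<in> gen_group H"
  shows "gen_group G \<subseteq> gen_group H"
proof
  fix g
  assume "g \<in> gen_group G"
  then show "g \<in> gen_group H"
    by induction (use assms in \<open>blast intro: gen_group.intros\<close>)+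
qed

lemma gen_group_restrict_cong:
  assumes "\<And>x. x \<in> qball \<Longrightarrow> f x = g x" and "restrict g qball \<in> gen_group G"
  shows "restrict f qball \<in> gen_group G"
  using assms(2) restrict_ext[of qball f g, OF assms(1)] by simp

lemma gen_group_comp:
  assumes "restrict f qball \<in> gen_group G" and "restrict g qball \<in> gen_group G"
    and "g ` qball \<subseteq> qball"
  shows "restrict (f \<circ> g) qball \<in> gen_group G"
proof -
  have "compose qball (restrict f qball) (restrict g qball) = restrict (f \<circ> g) qball"
    using assms(3) by (auto simp: compose_def fun_eq_iff)
  then show ?thesis
    using gen_group.gen_comp[OF assms(1,2)] by simp
qed

lemma left_translation_in_gen_group_model_maps:
  assumes A: "A \<in> Sp11" "commutes_actions (\<lambda>X. A ** X)"
  shows "restrict (induced (\<lambda>X. A ** X)) qball \<in> gen_group model_maps"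
proof -
  let ?d = "mat_d A"
  have "mat_b A = 0" "mat_c A = 0"
    using commutes_actions_left_mult_imp_diagonal[OF A(2)] by blast+
  then have "(norm ?d)\<^sup>2 = 1"
    using Sp11_norm_d[OF A(1)] by simp
  then have "norm ?d = 1"
    by (smt (verit) norm_ge_zero power2_eq_1_iff)
  then have "(\<lambda>q. of_real 1 * ?d * q * qcnj ?d) \<in> model_maps"
    unfolding model_maps_def Sp1_def by blast
  then have "restrict (\<lambda>q. of_real 1 * ?d * q * qcnj ?d) qball \<in> gen_group model_maps"
    by (rule gen_base)
  then show ?thesis
    by (rule gen_group_restrict_cong[rotated])
      (simp add: induced_left_mult[OF A(1) \<open>mat_b A = 0\<close>] inverse_quat_unit[OF \<open>norm ?d = 1\<close>])
qed

lemma right_translation_in_gen_group_model_maps: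
  assumes A: "A \<in> Sp11" "commutes_actions (\<lambda>X. X ** A)"
  shows "restrict (induced (\<lambda>X. X ** A)) qball \<in> gen_group model_maps"
proof -
  have "real_qmat A"
    using A(2) commutes_actions_right_mult_iff by blast
  have mob: "restrict (mobius (Hmat s)) qball \<in> gen_group model_maps" for s
    by (rule gen_base) (auto simp: model_maps_def)
  show ?thesis
  proof (rule mobius_real_Sp11[OF A(1) \<open>real_qmat A\<close>])
    fix t
    assume "mobius A = mobius (Hmat t)"
    then show ?thesis
      by (intro gen_group_restrict_cong[OF _ mob]) (simp add: induced_right_mult[OF A(1) \<open>real_qmat A\<close>])
  next
    fix t
    assume mobius_A: "mobius A = (\<lambda>q. - mobius (Hmat t) q)"
    have "restrict (\<lambda>q. of_real (-1) * 1 * q * qcnj 1) qball \<in> gen_group model_maps"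
      by (rule gen_base) (unfold model_maps_def, use Sp1_basis(1) in blast)
    then have "restrict (mobius (Hmat (- t)) \<circ> (\<lambda>q. of_real (-1) * 1 * q * qcnj 1)) qball
        \<in> gen_group model_maps"
      by (intro gen_group_comp mob) (auto simp: qball_def)
    then show ?thesis
      by (rule gen_group_restrict_cong[rotated])
        (simp add: induced_right_mult[OF A(1) \<open>real_qmat A\<close>] mobius_A mobius_Hmat_uminus)
  qed
qed

lemma rotation_in_gen_group_translation_maps:
  assumes u: "u \<in> Sp1" and \<epsilon>: "\<epsilon> \<in> {1, -1}"
  shows "restrict (\<lambda>q. of_real \<epsilon> * u * q * qcnj u) qball \<in> gen_group translation_maps"
proof -
  let ?rot = "induced (\<lambda>X. diag2 1 u ** X)" and ?neg = "induced (\<lambda>X. X ** I11)"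
  have rot_eq: "?rot q = u * q * qcnj u" if "q \<in> qball" for q
    using induced_left_mult[OF diag2_Sp11[OF u] _ that] u by (simp add: Sp1_def inverse_quat_unit)
  have neg_eq: "?neg q = - q" if "q \<in> qball" for q
    using induced_right_mult[OF I11_Sp11 real_qmat_I11 that] by (simp add: mobius_def)
  have rot: "restrict ?rot qball \<in> gen_group translation_maps"
    using diag2_Sp11[OF u] commutes_actions_left_mult_diag2
    unfolding translation_maps_def by (intro gen_base) blast
  have neg: "restrict ?neg qball \<in> gen_group translation_maps"
    using I11_Sp11 real_qmat_I11 commutes_actions_right_mult_iff
    unfolding translation_maps_def by (intro gen_base) blast
  from \<epsilon> show ?thesis
  proof
    assume "\<epsilon> = 1"
    then show ?thesis
      using rot_eq by (intro gen_group_restrict_cong[OF _ rot]) simp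
  next
    assume "\<epsilon> \<in> {-1}"
    have "?rot ` qball \<subseteq> qball"
      using rot_eq u by (auto simp: qball_def Sp1_def norm_mult)
    then have "restrict (?neg \<circ> ?rot) qball \<in> gen_group translation_maps"
      by (rule gen_group_comp[OF neg rot])
    then show ?thesis
      by (rule gen_group_restrict_cong[rotated])
        (use \<open>\<epsilon> \<in> {-1}\<close> \<open>?rot ` qball \<subseteq> qball\<close> in \<open>auto simp: rot_eq neg_eq\<close>)
  qed
qed

lemma mobius_Hmat_in_gen_group_translation_maps:
  "restrict (mobius (Hmat t)) qball \<in> gen_group translation_maps"
proof -
  have "restrict (induced (\<lambda>X. X ** Hmat t)) qball \<in> gen_group translation_maps"
    using Hmat_Sp11 real_qmat_Hmat commutes_actions_right_mult_iff
    unfolding translation_maps_def by (intro gen_base) blast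
  then show ?thesis
    by (rule gen_group_restrict_cong[rotated]) (simp add: induced_right_mult[OF Hmat_Sp11 real_qmat_Hmat])
qed

theorem proposition3p11:
  shows "gen_group translation_maps = gen_group model_maps"
proof
  show "gen_group translation_maps \<subseteq> gen_group model_maps"
  proof (rule gen_group_subset)
    fix f
    assume "f \<in> translation_maps"
    then show "restrict f qball \<in> gen_group model_maps"
      unfolding translation_maps_def
      using left_translation_in_gen_group_model_maps right_translation_in_gen_group_model_maps
      by blast
  qed
  show "gen_group model_maps \<subseteq> gen_group translation_maps"
  proof (rule gen_group_subset)
    fix f
    assume "f \<in> model_maps"
    then show "restrict f qball \<in> gen_group translation_maps"
      unfolding model_maps_def
      using rotation_in_gen_group_translation_maps mobius_Hmat_in_gen_group_translation_maps
      by blast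
  qed
qed

end
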